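(* For every $n$ with $2\le n\le\infty$, the single identity $xyx\approx yx^2$ is a finite identity basis for the stalactic monoid $\mathrm{stal}_n$ and for the taiga monoid $\mathrm{taig}_n$. Consequently, all stalactic and taiga monoids of rank at least $2$ (including rank $\infty$) are equationally equivalent, i.e. satisfy exactly the same identities.
   Context: Let $\mathcal{A}=\{1<2<3<\cdots\}$ and $\mathcal{A}_n=\{1<\cdots<n\}$; write $\mathcal{A}_\infty=\mathcal{A}$. A stalactic tableau is a finite array of symbols of $\mathcal{A}$ whose columns are top-aligned and in which two symbols lie in the same column iff they are equal. Inserting $a$ into a stalactic tableau $T$: if $a$ does not appear in $T$, add $a$ as a new column at the left end of the top row; otherwise append $a$ at the bottom of the column containing $a$. A binary search tree with multiplicities is a binary tree with pairwise distinct labels from $\mathcal{A}$ (each label greater than all labels in its left subtree and less than all labels in its right subtree) with a positive integer multiplicity attached to each node. Inserting $a$ into such a tree $T$: if $T$ is empty, create a node labelled $a$ with multiplicity $1$; otherwise, with root label $x$, recursively insert into the left subtree if $a<x$, into the right subtree if $a>x$, and increase the multiplicity of the root by $1$ if $a=x$. For a word $w=w_1\cdots w_k\in\mathcal{A}^*$, $\mathrm{P}_{\mathrm{stal}}(w)$ (resp. $\mathrm{P}_{\mathrm{taig}}(w)$) is obtained from the empty tableau (resp. empty tree) by inserting $w_k,w_{k-1},\dots,w_1$ in this order (reading $w$ right to left). The relation $u\equiv v \iff \mathrm{P}(u)=\mathrm{P}(v)$ is a congruence on $\mathcal{A}^*$; $\mathrm{stal}_n$ (resp. $\mathrm{taig}_n$)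 is the quotient monoid $\mathcal{A}_n^*/{\equiv}$ for the stalactic (resp. taiga) insertion, $2\le n\le\infty$. Identities: $\mathcal{X}$ is a countably infinite alphabet; an identity is $\mathbf{u}\approx\mathbf{v}$ with $\mathbf{u},\mathbf{v}\in\mathcal{X}^*$; a monoid $S$ satisfies it if $\varphi(\mathbf{u})=\varphi(\mathbf{v})$ for all maps $\varphi:\mathcal{X}\to S$ (extended to monoid homomorphisms). $\mathbf{u}\approx\mathbf{v}$ is derived from a set $\Sigma$ if there is a sequence $\mathbf{u}=\mathbf{u}_1,\dots,\mathbf{u}_n=\mathbf{v}$ with $\mathbf{u}_i=\mathbf{a}\varphi(\mathbf{p})\mathbf{b}$, $\mathbf{u}_{i+1}=\mathbf{a}\varphi(\mathbf{q})\mathbf{b}$ for some words $\mathbf{a},\mathbf{b}$, an endomorphism $\varphi$ of $\mathcal{X}^*$, and $\mathbf{p}\approx\mathbf{q}\in\Sigma$. A finite identity basis for $S$ is a finite set $\Sigma$ of identities satisfied by $S$ from which every identity satisfied by $S$ is derived. *)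

theory Defs
  imports Main "HOL-Library.Extended_Nat"
begin

text \<open>The alphabet A_n = {1 < ... < n} of rank n, with n = \<infinity> giving A = {1 < 2 < ...}.\<close>
definition alph :: "enat \<Rightarrow> nat set" where
  "alph n = {a. 1 \<le> a \<and> enat a \<le> n}"

text \<open>A stalactic tableau is represented as the list of its columns, read left to right
  along the top row; each column is the list of its (equal) entries from top to bottom.\<close>
type_synonym stal_tableau = "nat list list"

definition stal_ins :: "nat \<Rightarrow> stal_tableau \<Rightarrow> stal_tableau" where
  "stal_ins a T =
     (if a \<in> set (concat T) then map (\<lambda>c. if a \<in> set c then c @ [a] else c) T
      else [a] # T)"

text \<open>Right-to-left insertion: w_k is inserted first, w_1 last.\<close>
definition P_stal :: "nat list \<Rightarrow> stal_tableau" where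
  "P_stal w = foldr stal_ins w []"

datatype bstm = Leaf | Node bstm nat nat bstm
  (* Node left label multiplicity right *)

fun taig_ins :: "nat \<Rightarrow> bstm \<Rightarrow> bstm" where
  "taig_ins a Leaf = Node Leaf a 1 Leaf"
| "taig_ins a (Node l x m r) =
     (if a < x then Node (taig_ins a l) x m r
      else if a > x then Node l x m (taig_ins a r)
      else Node l x (Suc m) r)"

definition P_taig :: "nat list \<Rightarrow> bstm" where
  "P_taig w = foldr taig_ins w Leaf"

text \<open>Variables of the countably infinite alphabet X are natural numbers; an identity
  u \<approx> v is a pair of words over X.\<close>
type_synonym identity = "nat list \<times> nat list"

definition subst :: "(nat \<Rightarrow> 'b list) \<Rightarrow> nat list \<Rightarrow> 'b list" where
  "subst \<phi> u = concat (map \<phi> u)"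

text \<open>Satisfaction of an identity in the monoid A_n^*/\<equiv>_P, where u \<equiv>_P v iff P u = P v.
  Since the quotient map A_n^* \<rightarrow> A_n^*/\<equiv>_P is a surjective monoid morphism, every map
  X \<rightarrow> A_n^*/\<equiv>_P factors through a map X \<rightarrow> A_n^*, so satisfaction is expressed by
  quantifying over maps X \<rightarrow> A_n^*.\<close>
definition satisfies :: "(nat list \<Rightarrow> 'c) \<Rightarrow> enat \<Rightarrow> identity \<Rightarrow> bool" where
  "satisfies P n uv \<longleftrightarrow>
     (\<forall>\<phi> :: nat \<Rightarrow> nat list. (\<forall>x. set (\<phi> x) \<subseteq> alph n) \<longrightarrow>
        P (subst \<phi> (fst uv)) = P (subst \<phi> (snd uv)))"

abbreviation stal_satisfies :: "enat \<Rightarrow> identity \<Rightarrow> bool" where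
  "stal_satisfies n uv \<equiv> satisfies P_stal n uv"

abbreviation taig_satisfies :: "enat \<Rightarrow> identity \<Rightarrow> bool" where
  "taig_satisfies n uv \<equiv> satisfies P_taig n uv"

definition deriv_step :: "identity set \<Rightarrow> nat list \<Rightarrow> nat list \<Rightarrow> bool" where
  "deriv_step \<Sigma> u v \<longleftrightarrow>
     (\<exists>a b p q (\<phi> :: nat \<Rightarrow> nat list). ((p, q) \<in> \<Sigma> \<or> (q, p) \<in> \<Sigma>) \<and>
        u = a @ subst \<phi> p @ b \<and> v = a @ subst \<phi> q @ b)"

definition derived :: "identity set \<Rightarrow> identity \<Rightarrow> bool" where
  "derived \<Sigma> uv \<longleftrightarrow> (deriv_step \<Sigma>)\<^sup>*\<^sup>* (fst uv) (snd uv)"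

definition finite_identity_basis :: "(identity \<Rightarrow> bool) \<Rightarrow> identity set \<Rightarrow> bool" where
  "finite_identity_basis sat \<Sigma> \<longleftrightarrow>
     finite \<Sigma> \<and> (\<forall>uv \<in> \<Sigma>. sat uv) \<and> (\<forall>uv. sat uv \<longrightarrow> derived \<Sigma> uv)"

text \<open>The identity xyx \<approx> yx^2 with x = variable 0, y = variable 1.\<close>
definition xyx_id :: identity where
  "xyx_id = ([0, 1, 0], [1, 0, 0])"

end

theory Submission
  imports Defs "HOL-Library.Multiset"
begin

text \<open>Both the stalactic tableau and the taiga tree of a word depend only on how often each
  letter occurs and on the order of the last occurrences of the letters; this relation is stable
  under substitution, so related words form identities of both monoids. Conversely, from an
  identity u \<approx> v one reads off the contents by sending one variable to a letter and erasing the
  others, and the last letter by sending x to one letter and all other variables to another;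
  erasing that last variable everywhere and recursing recovers the order of last occurrences.
  Finally, xyx \<approx> yx^2 moves any earlier occurrence of x next to its last occurrence, so u derives
  the word listing each letter with its full multiplicity in the order of last occurrences,
  which depends only on the class of u.\<close>

text \<open>remdups keeps the last occurrence of each letter, so the second conjunct compares
  the orders of last occurrences.\<close>
definition last_occ_equiv :: "'a list \<Rightarrow> 'a list \<Rightarrow> bool" where
  "last_occ_equiv u v \<longleftrightarrow> mset u = mset v \<and> remdups u = remdups v"

lemma remdups_snoc: "remdups (xs @ [x]) = remdups (filter (\<lambda>z. z \<noteq> x) xs) @ [x]"
  by (induction xs) auto

lemma last_occ_equiv_filter:
  "last_occ_equiv u v \<Longrightarrow> last_occ_equiv (filter P u) (filter P v)"
  by (simp add: last_occ_equiv_def remdups_filter)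

lemma mset_subst: "mset (subst \<phi> u) = (\<Sum>x\<in>#mset u. mset (\<phi> x))"
  by (induction u) (auto simp: subst_def)

lemma remdups_subst_remdups: "remdups (subst \<phi> (remdups u)) = remdups (subst \<phi> u)"
  unfolding subst_def by (metis remdups_concat remdups_map_remdups)

lemma last_occ_equiv_subst:
  "last_occ_equiv u v \<Longrightarrow> last_occ_equiv (subst \<phi> u) (subst \<phi> v)"
  unfolding last_occ_equiv_def by (metis mset_subst remdups_subst_remdups)

lemma deriv_step_append:
  "deriv_step \<Sigma> u v \<Longrightarrow> deriv_step \<Sigma> (a @ u @ b) (a @ v @ b)"
  unfolding deriv_step_def by (metis append.assoc)

lemma rtranclp_deriv_step_append:
  "(deriv_step \<Sigma>)\<^sup>*\<^sup>* u v \<Longrightarrow> (deriv_step \<Sigma>)\<^sup>*\<^sup>* (a @ u @ b) (a @ v @ b)"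
  by (induction rule: rtranclp_induct) (auto intro: rtranclp.rtrancl_into_rtrancl deriv_step_append)

lemma symp_deriv_step: "symp (deriv_step \<Sigma>)"
  unfolding symp_def deriv_step_def by blast

lemma deriv_step_xyx: "deriv_step {xyx_id} ([x] @ w @ [x] @ b) (w @ [x, x] @ b)"
  unfolding deriv_step_def xyx_id_def
  by (rule exI[of _ "[]"], rule exI[of _ b], rule exI[of _ "[0,1,0]"], rule exI[of _ "[1,0,0]"],
      rule exI[of _ "\<lambda>i. if i = 0 then [x] else w"]) (simp add: subst_def)

lemma rtranclp_xyx_gather_occurrences:
  "(deriv_step {xyx_id})\<^sup>*\<^sup>* (u @ x # v) (filter (\<lambda>z. z \<noteq> x) u @ replicate (count_list u x) x @ x # v)"
proof (induction u)
  case Nil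
  then show ?case by simp
next
  case (Cons y u)
  let ?u' = "filter (\<lambda>z. z \<noteq> x) u" and ?c = "count_list u x"
  have IH: "(deriv_step {xyx_id})\<^sup>*\<^sup>* (y # u @ x # v) (y # ?u' @ replicate ?c x @ x # v)"
    using rtranclp_deriv_step_append[OF Cons.IH, of "[y]" "[]"] by simp
  show ?case
  proof (cases "y = x")
    case True
    have "deriv_step {xyx_id} ([x] @ ?u' @ [x] @ replicate ?c x @ v) (?u' @ [x, x] @ replicate ?c x @ v)"
      by (rule deriv_step_xyx)
    then show ?thesis using IH True by (simp add: replicate_app_Cons_same rtranclp.rtrancl_into_rtrancl)
  next
    case False
    then show ?thesis using IH by simp
  qed
qed

lemma rtranclp_xyx_if_last_occ_equiv:
  "last_occ_equiv u v \<Longrightarrow> (deriv_step {xyx_id})\<^sup>*\<^sup>* u v"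
proof (induction "length u" arbitrary: u v rule: less_induct)
  case less
  show ?case
  proof (cases u rule: rev_exhaust)
    case Nil
    then show ?thesis using less.prems by (simp add: last_occ_equiv_def)
  next
    case (snoc u' x)
    obtain v' where v: "v = v' @ [x]"
      using less.prems snoc by (cases v rule: rev_exhaust) (auto simp: last_occ_equiv_def remdups_snoc)
    let ?drop = "filter (\<lambda>z. z \<noteq> x)"
    have "last_occ_equiv (?drop u') (?drop v')"
      using last_occ_equiv_filter[OF less.prems, of "\<lambda>z. z \<noteq> x"] snoc v by simp
    then have IH: "(deriv_step {xyx_id})\<^sup>*\<^sup>* (?drop u') (?drop v')"
      using less.hyps snoc by (simp add: le_imp_less_Suc)
    have count: "count_list u' x = count_list v' x"
      using less.prems snoc v by (metis add_right_cancel count_list_append last_occ_equiv_def count_mset)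
    have "(deriv_step {xyx_id})\<^sup>*\<^sup>* u (?drop u' @ replicate (count_list u' x) x @ [x])"
      using rtranclp_xyx_gather_occurrences[of u' x "[]"] snoc by simp
    also have "(deriv_step {xyx_id})\<^sup>*\<^sup>* \<dots> (?drop v' @ replicate (count_list v' x) x @ [x])"
      using rtranclp_deriv_step_append[OF IH, of "[]"] count by simp
    also have "(deriv_step {xyx_id})\<^sup>*\<^sup>* \<dots> v"
      using sympD[OF symp_rtranclp[OF symp_deriv_step] rtranclp_xyx_gather_occurrences[of v' x "[]"]] v by simp
    finally show ?thesis .
  qed
qed

lemma subst_filter: "subst \<phi> (filter Q u) = subst (\<lambda>z. if Q z then \<phi> z else []) u"
  by (induction u) (auto simp: subst_def)

lemma satisfies_filter:
  assumes "satisfies P n (u, v)"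
  shows "satisfies P n (filter Q u, filter Q v)"
  unfolding satisfies_def
proof (intro allI impI)
  fix \<phi> :: "nat \<Rightarrow> nat list"
  assume "\<forall>x. set (\<phi> x) \<subseteq> alph n"
  then have "\<forall>x. set (if Q x then \<phi> x else []) \<subseteq> alph n" by auto
  then show "P (subst \<phi> (fst (filter Q u, filter Q v))) = P (subst \<phi> (snd (filter Q u, filter Q v)))"
    using assms by (simp add: satisfies_def subst_filter)
qed

lemma satisfies_map:
  assumes "satisfies P n (u, v)" and "\<And>z. f z \<in> alph n"
  shows "P (map f u) = P (map f v)"
proof -
  have subst_letters: "subst (\<lambda>z. [f z]) w = map f w" for w
    by (induction w) (simp_all add: subst_def)
  from assms(1) have "P (subst (\<lambda>z. [f z]) u) = P (subst (\<lambda>z. [f z]) v)"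
    unfolding satisfies_def using assms(2) by auto
  then show ?thesis unfolding subst_letters .
qed

lemma one_two_in_alph: "2 \<le> n \<Longrightarrow> {1, 2} \<subseteq> alph n"
proof -
  assume "2 \<le> n"
  then have "enat 2 \<le> n" by (simp add: numeral_eq_enat)
  moreover from this have "enat 1 \<le> n" by (rule order_trans[rotated]) simp
  ultimately show ?thesis unfolding alph_def by simp
qed

locale last_occ_invariant =
  fixes P :: "nat list \<Rightarrow> 'c"
  assumes eq_if_last_occ_equiv: "last_occ_equiv u v \<Longrightarrow> P u = P v"
    and replicate_one_inj: "P (replicate k 1) = P (replicate k' 1) \<Longrightarrow> k = k'"
    and last_eq: "w \<noteq> [] \<Longrightarrow> w' \<noteq> [] \<Longrightarrow> P w = P w' \<Longrightarrow> last w = last w'"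
begin

lemma satisfies_imp_mset_eq:
  assumes n: "2 \<le> n" and sat: "satisfies P n (u, v)"
  shows "mset u = mset v"
proof (rule multiset_eqI)
  fix x
  have "P (map (\<lambda>_. 1) (filter ((=) x) u)) = P (map (\<lambda>_. 1) (filter ((=) x) v))"
    using satisfies_map[OF satisfies_filter[OF sat]] one_two_in_alph[OF n] by simp
  then have "length (filter ((=) x) u) = length (filter ((=) x) v)"
    by (simp add: map_replicate_const replicate_one_inj)
  then show "count (mset u) x = count (mset v) x"
    by (simp add: count_mset count_list_eq_length_filter)
qed

lemma satisfies_imp_remdups_eq:
  assumes n: "2 \<le> n" and "satisfies P n (u, v)"
  shows "remdups u = remdups v"
  using assms(2)
proof (induction "length u" arbitrary: u v rule: less_induct)
  case less
  have mset: "mset u = mset v" using satisfies_imp_mset_eq[OF n less.prems] .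
  show ?case
  proof (cases u rule: rev_exhaust)
    case Nil
    then show ?thesis using mset by simp
  next
    case (snoc u' x)
    let ?two_letters = "\<lambda>z. if z = x then 1 else 2 :: nat"
    have "v \<noteq> []" using mset snoc by auto
    have "P (map ?two_letters u) = P (map ?two_letters v)"
      using satisfies_map[OF less.prems] one_two_in_alph[OF n] by simp
    then have "last (map ?two_letters u) = last (map ?two_letters v)"
      by (rule last_eq[rotated 2]) (use snoc \<open>v \<noteq> []\<close> in simp_all)
    then have "?two_letters (last v) = 1"
      using snoc \<open>v \<noteq> []\<close> by (simp add: last_map)
    then have "last v = x" by (simp split: if_splits)
    then obtain v' where v: "v = v' @ [x]"
      using \<open>v \<noteq> []\<close> append_butlast_last_id by metis
    let ?drop = "filter (\<lambda>z. z \<noteq> x)"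
    have "length (?drop u) < length u" using snoc by (simp add: le_imp_less_Suc)
    then have "remdups (?drop u) = remdups (?drop v)"
      using less.hyps satisfies_filter[OF less.prems] by blast
    then show ?thesis using snoc v by (simp add: remdups_snoc)
  qed
qed

lemma satisfies_iff_last_occ_equiv:
  assumes "2 \<le> n"
  shows "satisfies P n uv \<longleftrightarrow> last_occ_equiv (fst uv) (snd uv)"
proof
  assume "satisfies P n uv"
  then show "last_occ_equiv (fst uv) (snd uv)"
    using satisfies_imp_mset_eq[OF assms] satisfies_imp_remdups_eq[OF assms]
    by (simp add: last_occ_equiv_def)
next
  assume "last_occ_equiv (fst uv) (snd uv)"
  then show "satisfies P n uv"
    unfolding satisfies_def by (auto intro: eq_if_last_occ_equiv last_occ_equiv_subst)
qed

end

lemma count_list_eq_if_mset_eq: "mset u = mset v \<Longrightarrow> count_list u = count_list v"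
  by (simp add: fun_eq_iff flip: count_mset)

lemma P_stal_eq: "P_stal w = map (\<lambda>x. replicate (count_list w x) x) (remdups w)"
proof (induction w)
  case Nil
  then show ?case by (simp add: P_stal_def)
next
  case (Cons a w)
  have "P_stal (a # w) = stal_ins a (P_stal w)" by (simp add: P_stal_def)
  then show ?case using Cons.IH
    by (auto simp: stal_ins_def count_list_0_iff replicate_append_same intro!: map_cong)
qed

lemma last_P_stal: "w \<noteq> [] \<Longrightarrow> hd (last (P_stal w)) = last w"
proof -
  assume "w \<noteq> []"
  then obtain w' x where "w = w' @ [x]" by (cases w rule: rev_exhaust) auto
  then show ?thesis by (simp add: P_stal_eq remdups_snoc)
qed

lemma P_stal_replicate: "P_stal (replicate k a) = (if k = 0 then [] else [replicate k a])"
  by (induction k) (auto simp: P_stal_def stal_ins_def replicate_append_same)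

interpretation stal: last_occ_invariant P_stal
proof
  fix u v :: "nat list"
  assume "last_occ_equiv u v"
  then show "P_stal u = P_stal v"
    unfolding last_occ_equiv_def P_stal_eq using count_list_eq_if_mset_eq by metis
next
  fix k k' :: nat
  assume "P_stal (replicate k 1) = P_stal (replicate k' 1)"
  then show "k = k'" by (simp add: P_stal_replicate split: if_splits)
next
  fix w w' :: "nat list"
  assume "w \<noteq> []" "w' \<noteq> []" "P_stal w = P_stal w'"
  then show "last w = last w'" by (metis last_P_stal)
qed

fun labels :: "bstm \<Rightarrow> nat set" where
  "labels Leaf = {}"
| "labels (Node l x m r) = labels l \<union> {x} \<union> labels r"

fun search_tree :: "bstm \<Rightarrow> bool" where
  "search_tree Leaf = True"
| "search_tree (Node l x m r) \<longleftrightarrow>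
     search_tree l \<and> search_tree r \<and> (\<forall>y\<in>labels l. y < x) \<and> (\<forall>y\<in>labels r. x < y)"

fun with_mults :: "(nat \<Rightarrow> nat) \<Rightarrow> bstm \<Rightarrow> bstm" where
  "with_mults c Leaf = Leaf"
| "with_mults c (Node l x m r) = Node (with_mults c l) x (c x) (with_mults c r)"

fun root :: "bstm \<Rightarrow> nat" where
  "root Leaf = 0"
| "root (Node l x m r) = x"

lemma labels_taig_ins: "labels (taig_ins a t) = insert a (labels t)"
  by (induction t) auto

lemma search_tree_taig_ins: "search_tree t \<Longrightarrow> search_tree (taig_ins a t)"
  by (induction t) (auto simp: labels_taig_ins)

lemma labels_P_taig: "labels (P_taig w) = set w"
  by (induction w) (auto simp: P_taig_def labels_taig_ins)

lemma search_tree_P_taig: "search_tree (P_taig w)"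
  by (induction w) (auto simp: P_taig_def search_tree_taig_ins)

lemma with_mults_cong: "(\<And>y. y \<in> labels t \<Longrightarrow> c y = c' y) \<Longrightarrow> with_mults c t = with_mults c' t"
  by (induction t) auto

lemma taig_ins_with_mults_mem:
  "search_tree t \<Longrightarrow> a \<in> labels t \<Longrightarrow> taig_ins a (with_mults c t) = with_mults (c(a := Suc (c a))) t"
proof (induction t)
  case (Node l x m r)
  then consider "a < x" "a \<in> labels l" "a \<notin> labels r" | "a = x" "a \<notin> labels l" "a \<notin> labels r"
    | "x < a" "a \<in> labels r" "a \<notin> labels l"
    by fastforce
  then show ?case using Node by cases (auto intro!: with_mults_cong)
qed simp

lemma taig_ins_with_mults_not_mem:
  "a \<notin> labels t \<Longrightarrow> taig_ins a (with_mults c t) = with_mults (c(a := 1)) (taig_ins a t)"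
  by (induction t) (auto intro!: with_mults_cong)

lemma P_taig_eq: "P_taig w = with_mults (count_list w) (P_taig (remdups w))"
proof (induction w)
  case Nil
  then show ?case by (simp add: P_taig_def)
next
  case (Cons a w)
  have P_Cons: "P_taig (a # w) = taig_ins a (P_taig w)" for a w by (simp add: P_taig_def)
  show ?case
  proof (cases "a \<in> set w")
    case True
    then have "P_taig (a # w) = with_mults ((count_list w)(a := Suc (count_list w a))) (P_taig (remdups w))"
      using Cons.IH by (simp add: P_Cons taig_ins_with_mults_mem search_tree_P_taig labels_P_taig)
    also have "(count_list w)(a := Suc (count_list w a)) = count_list (a # w)" by auto
    finally show ?thesis using True by simp
  next
    case False
    then have "P_taig (a # w) = with_mults ((count_list w)(a := 1)) (P_taig (a # remdups w))"
      using Cons.IH by (simp add: P_Cons taig_ins_with_mults_not_mem labels_P_taig)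
    also have "(count_list w)(a := 1) = count_list (a # w)" using False by (auto simp: fun_eq_iff)
    finally show ?thesis using False by simp
  qed
qed

lemma root_taig_ins: "t \<noteq> Leaf \<Longrightarrow> root (taig_ins a t) = root t"
  by (cases t) auto

lemma root_P_taig: "w \<noteq> [] \<Longrightarrow> root (P_taig w) = last w"
proof (induction w)
  case (Cons a w)
  have "P_taig w \<noteq> Leaf" if "w \<noteq> []"
    using that by (cases w; cases "P_taig (tl w)") (auto simp: P_taig_def)
  then show ?case using Cons by (cases "w = []") (auto simp: P_taig_def root_taig_ins)
qed simp

lemma P_taig_replicate: "P_taig (replicate k a) = (if k = 0 then Leaf else Node Leaf a k Leaf)"
  by (induction k) (auto simp: P_taig_def)

interpretation taig: last_occ_invariant P_taig
proof
  fix u v :: "nat list"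
  assume "last_occ_equiv u v"
  then show "P_taig u = P_taig v"
    unfolding last_occ_equiv_def by (metis P_taig_eq count_list_eq_if_mset_eq)
next
  fix k k' :: nat
  assume "P_taig (replicate k 1) = P_taig (replicate k' 1)"
  then show "k = k'" by (simp add: P_taig_replicate split: if_splits)
next
  fix w w' :: "nat list"
  assume "w \<noteq> []" "w' \<noteq> []" "P_taig w = P_taig w'"
  then show "last w = last w'" by (metis root_P_taig)
qed

lemma finite_identity_basis_xyx:
  assumes "\<And>uv. sat uv \<longleftrightarrow> last_occ_equiv (fst uv) (snd uv)"
  shows "finite_identity_basis sat {xyx_id}"
  using assms rtranclp_xyx_if_last_occ_equiv
  by (auto simp: finite_identity_basis_def derived_def last_occ_equiv_def xyx_id_def)

theorem theorem4p2:
  fixes n :: enat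
  assumes "2 \<le> n"
  shows "finite_identity_basis (stal_satisfies n) {xyx_id}
       \<and> finite_identity_basis (taig_satisfies n) {xyx_id}
       \<and> (\<forall>m :: enat. 2 \<le> m \<longrightarrow>
            (\<forall>uv. (stal_satisfies n uv \<longleftrightarrow> stal_satisfies m uv)
                \<and> (stal_satisfies n uv \<longleftrightarrow> taig_satisfies m uv)))"
proof -
  have "stal_satisfies m uv \<longleftrightarrow> last_occ_equiv (fst uv) (snd uv)"
    and "taig_satisfies m uv \<longleftrightarrow> last_occ_equiv (fst uv) (snd uv)" if "2 \<le> m" for m uv
    using stal.satisfies_iff_last_occ_equiv taig.satisfies_iff_last_occ_equiv that by blast+
  then show ?thesis using assms by (simp add: finite_identity_basis_xyx)
qed

end
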